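(* Let $p$ be a prime and $k,\ell$ integers with $k>0$, $\ell\ge0$; put $q=p^k$ and $Q=p^{\ell}$. For any $c\in\mathbb{F}_q^*$, let \[ f_6(X)=X^{3q}-3X^{2q+1}+3X^{q+2}-X^3+cX^{q^2Q}+cX^{qQ}+cX^{Q}. \] Then $f_6(X)$ permutes $\mathbb{F}_{q^3}$ if and only if $q\equiv 2\pmod 3$.
   Context: A polynomial permutes $\mathbb{F}_{q^3}$ if the induced map $\mathbb{F}_{q^3}\to\mathbb{F}_{q^3}$ is a bijection. *)

theory Defs
  imports "HOL-Computational_Algebra.Primes"
begin

definition f6 :: "nat \<Rightarrow> nat \<Rightarrow> 'a::field \<Rightarrow> 'a \<Rightarrow> 'a" where
  "f6 q Q c x = x ^ (3*q) - 3 * x ^ (2*q+1) + 3 * x ^ (q+2) - x ^ 3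
      + c * x ^ (q^2 * Q) + c * x ^ (q * Q) + c * x ^ Q"

end

theory Submission
  imports Defs "HOL-Computational_Algebra.Polynomial" "HOL-Number_Theory.Residues"
begin

(*
  Let \<sigma> be the Frobenius x \<mapsto> x^q of F_{q^3} and Tr x = x + \<sigma> x + \<sigma>(\<sigma> x). Since
  x \<mapsto> x^Q is additive, f6(x) = (\<sigma> x - x)^3 + c Tr(x)^Q.

  If 3 divides q, then f6(0) = f6(1). If q = 1 (mod 3), F_q contains a primitive cube root
  of unity z, and x \<mapsto> z x + (1 - z) Tr(x)/3 multiplies \<sigma> x - x by z and preserves Tr x,
  hence preserves f6, while moving every x outside F_q.

  If q = 2 (mod 3), cubing is injective on F_{q^3}. If f6(x) = f6(y), then u^3 - v^3 is
  fixed by \<sigma>, where u = \<sigma> x - x and v = \<sigma> y - y have trace 0. A trace-zero u satisfies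
  u^3 = e3(u) - e2(u) u, where e2 and e3 are the elementary symmetric functions of u, \<sigma> u,
  \<sigma>(\<sigma> u) and lie in F_q. So e2(v) v - e2(u) u is \<sigma>-fixed with trace 0, hence 0. Then
  u = \<lambda> v with \<lambda> in F_q, and injectivity of cubing gives u = v. Consequently Tr x = Tr y, and
  x - y lies in F_q with trace 3 (x - y) = 0.
*)

(* \<sigma>^3 = id only: \<sigma> = id is an instance. *)
locale period_3_automorphism =
  fixes \<sigma> :: "'a::field \<Rightarrow> 'a"
  assumes sigma_add: "\<sigma> (x + y) = \<sigma> x + \<sigma> y"
    and sigma_mult: "\<sigma> (x * y) = \<sigma> x * \<sigma> y"
    and sigma_sigma_sigma: "\<sigma> (\<sigma> (\<sigma> x)) = x"
begin

lemma sigma_zero [simp]: "\<sigma> 0 = 0"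
  using sigma_add[of 0 0] by (metis add_cancel_right_right)

lemma sigma_uminus: "\<sigma> (- x) = - \<sigma> x"
  using sigma_add[of x "- x"] by (intro minus_unique[symmetric]) simp

lemma sigma_diff: "\<sigma> (x - y) = \<sigma> x - \<sigma> y"
  using sigma_add[of x "- y"] by (simp add: sigma_uminus)

lemma sigma_inject: "\<sigma> x = \<sigma> y \<longleftrightarrow> x = y"
  by (metis sigma_sigma_sigma)

lemma sigma_one [simp]: "\<sigma> 1 = 1"
proof -
  have "\<sigma> 1 \<noteq> 0"
    using sigma_inject[of 1 0] by simp
  moreover have "\<sigma> 1 * \<sigma> 1 = \<sigma> 1"
    using sigma_mult[of 1 1] by simp
  ultimately show ?thesis
    by (metis mult_cancel_left1)
qed

lemma sigma_power: "\<sigma> (x ^ n) = \<sigma> x ^ n"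
  by (induction n) (simp_all add: sigma_mult)

lemma sigma_of_nat [simp]: "\<sigma> (of_nat n) = of_nat n"
  by (induction n) (simp_all add: sigma_add)

lemma sigma_numeral [simp]: "\<sigma> (numeral n) = numeral n"
  using sigma_of_nat[of "numeral n"] by simp

lemma sigma_inverse: "\<sigma> (inverse x) = inverse (\<sigma> x)"
proof (cases "x = 0")
  case False
  then have "\<sigma> x * \<sigma> (inverse x) = 1"
    by (simp flip: sigma_mult)
  then show ?thesis
    by (rule inverse_unique[symmetric])
qed simp

lemma sigma_divide: "\<sigma> (x / y) = \<sigma> x / \<sigma> y"
  by (simp add: divide_inverse sigma_mult sigma_inverse)

lemmas sigma_simps = sigma_add sigma_mult sigma_uminus sigma_diff sigma_power sigma_divide
  sigma_sigma_sigma

definition trace :: "'a \<Rightarrow> 'a"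
  where "trace x = x + \<sigma> x + \<sigma> (\<sigma> x)"

definition esym2 :: "'a \<Rightarrow> 'a"
  where "esym2 x = x * \<sigma> x + x * \<sigma> (\<sigma> x) + \<sigma> x * \<sigma> (\<sigma> x)"

definition esym3 :: "'a \<Rightarrow> 'a"
  where "esym3 x = x * \<sigma> x * \<sigma> (\<sigma> x)"

lemma sigma_trace [simp]: "\<sigma> (trace x) = trace x"
  by (simp add: trace_def sigma_simps algebra_simps)

lemma sigma_esym2 [simp]: "\<sigma> (esym2 x) = esym2 x"
  by (simp add: esym2_def sigma_simps algebra_simps)

lemma sigma_esym3 [simp]: "\<sigma> (esym3 x) = esym3 x"
  by (simp add: esym3_def sigma_simps algebra_simps)

lemma trace_add: "trace (x + y) = trace x + trace y"
  by (simp add: trace_def sigma_add)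

lemma trace_diff: "trace (x - y) = trace x - trace y"
  by (simp add: trace_def sigma_diff)

lemma trace_mult_fixed: "\<sigma> a = a \<Longrightarrow> trace (a * x) = a * trace x"
  by (simp add: trace_def sigma_mult algebra_simps)

lemma trace_fixed: "\<sigma> x = x \<Longrightarrow> trace x = 3 * x"
  by (simp add: trace_def)

lemma trace_sigma_minus_self: "trace (\<sigma> x - x) = 0"
  by (simp add: trace_def sigma_simps)

lemma cube_eq_if_trace_eq_0:
  assumes "trace u = 0"
  shows "u ^ 3 = esym3 u - esym2 u * u"
proof -
  have conj: "\<sigma> (\<sigma> u) = - u - \<sigma> u"
    using assms by (simp add: trace_def eq_neg_iff_add_eq_0 algebra_simps)
  show ?thesis
    unfolding esym2_def esym3_def conj by (simp add: algebra_simps power3_eq_cube)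
qed

lemma fixed_if_cube_fixed:
  assumes "inj (\<lambda>x::'a. x ^ 3)" and "\<sigma> (u ^ 3) = u ^ 3"
  shows "\<sigma> u = u"
  by (rule injD[OF assms(1)]) (use assms(2) in \<open>simp add: sigma_power\<close>)

lemma eq_0_if_cube_fixed_trace_eq_0:
  assumes "inj (\<lambda>x::'a. x ^ 3)" and "(3::'a) \<noteq> 0"
    and "\<sigma> (u ^ 3) = u ^ 3" and "trace u = 0"
  shows "u = 0"
  using assms fixed_if_cube_fixed trace_fixed by fastforce

lemma esym2_mult_eq_if_cube_diff_fixed:
  assumes "(3::'a) \<noteq> 0" and "trace u = 0" and "trace v = 0"
    and "\<sigma> (u ^ 3 - v ^ 3) = u ^ 3 - v ^ 3"
  shows "esym2 u * u = esym2 v * v"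
proof -
  define r where "r = esym2 v * v - esym2 u * u"
  have "r = (u ^ 3 - v ^ 3) - esym3 u + esym3 v"
    using assms(2,3) by (simp add: r_def cube_eq_if_trace_eq_0)
  then have "\<sigma> r = r"
    using assms(4) by (simp add: sigma_diff sigma_add)
  then have "3 * r = trace r"
    by (simp add: trace_fixed)
  also have "\<dots> = esym2 v * trace v - esym2 u * trace u"
    by (simp add: r_def trace_diff trace_mult_fixed)
  finally show ?thesis
    using assms(1-3) by (simp add: r_def)
qed

lemma eq_if_cube_diff_fixed:
  assumes cube: "inj (\<lambda>x::'a. x ^ 3)" and three: "(3::'a) \<noteq> 0"
    and tu: "trace u = 0" and tv: "trace v = 0"
    and fixed: "\<sigma> (u ^ 3 - v ^ 3) = u ^ 3 - v ^ 3"
  shows "u = v"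
proof (cases "esym2 u = 0")
  case True
  then have "\<sigma> (u ^ 3) = u ^ 3"
    by (simp add: cube_eq_if_trace_eq_0[OF tu])
  then have u0: "u = 0"
    using eq_0_if_cube_fixed_trace_eq_0[OF cube three _ tu] by simp
  then have "\<sigma> (v ^ 3) = v ^ 3"
    using fixed by (simp add: sigma_uminus)
  then have "v = 0"
    using eq_0_if_cube_fixed_trace_eq_0[OF cube three _ tv] by simp
  with u0 show ?thesis
    by simp
next
  case False
  define l where "l = esym2 v / esym2 u"
  have l_fixed: "\<sigma> l = l"
    by (simp add: l_def sigma_divide)
  have ul: "u = l * v"
    using esym2_mult_eq_if_cube_diff_fixed[OF three tu tv fixed] False
    by (simp add: l_def field_simps)
  show ?thesis
  proof (cases "l ^ 3 = 1")
    case True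
    then have "l = 1"
      using injD[OF cube, of l 1] by simp
    then show ?thesis
      using ul by simp
  next
    case False
    then have "v ^ 3 = (u ^ 3 - v ^ 3) / (l ^ 3 - 1)"
      by (simp add: ul field_simps power_mult_distrib)
    then have "\<sigma> (v ^ 3) = v ^ 3"
      using fixed l_fixed by (metis sigma_divide sigma_diff sigma_power sigma_one)
    then have "v = 0"
      using eq_0_if_cube_fixed_trace_eq_0[OF cube three _ tv] by simp
    then show ?thesis
      using ul by simp
  qed
qed

lemma eq_if_sigma_minus_self_eq_trace_eq:
  assumes "(3::'a) \<noteq> 0" and "\<sigma> x - x = \<sigma> y - y" and "trace x = trace y"
  shows "x = y"
proof -
  have "\<sigma> (x - y) = x - y"
    using assms(2) by (simp add: sigma_diff algebra_simps)
  then have "3 * (x - y) = trace (x - y)"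
    by (simp add: trace_fixed)
  also have "\<dots> = 0"
    using assms(3) by (simp add: trace_diff)
  finally show ?thesis
    using assms(1) by simp
qed

definition cube_trace_map :: "'a \<Rightarrow> ('a \<Rightarrow> 'a) \<Rightarrow> 'a \<Rightarrow> 'a"
  where "cube_trace_map c h x = (\<sigma> x - x) ^ 3 + c * h (trace x)"

theorem inj_cube_trace_map:
  assumes cube: "inj (\<lambda>x::'a. x ^ 3)" and three: "(3::'a) \<noteq> 0"
    and c: "\<sigma> c = c" "c \<noteq> 0"
    and h: "inj h" "\<And>t. \<sigma> t = t \<Longrightarrow> \<sigma> (h t) = h t"
  shows "inj (cube_trace_map c h)"
proof (rule injI)
  fix x y
  assume eq: "cube_trace_map c h x = cube_trace_map c h y"
  have diff: "(\<sigma> x - x) ^ 3 - (\<sigma> y - y) ^ 3 = c * (h (trace y) - h (trace x))"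
    using eq by (simp add: cube_trace_map_def algebra_simps)
  have "\<sigma> ((\<sigma> x - x) ^ 3 - (\<sigma> y - y) ^ 3) = (\<sigma> x - x) ^ 3 - (\<sigma> y - y) ^ 3"
    unfolding diff using c h(2) by (simp add: sigma_mult sigma_diff)
  then have sigma_minus_self: "\<sigma> x - x = \<sigma> y - y"
    by (rule eq_if_cube_diff_fixed[OF cube three trace_sigma_minus_self trace_sigma_minus_self])
  moreover have "trace x = trace y"
  proof (rule injD[OF h(1)])
    show "h (trace x) = h (trace y)"
      using diff c(2) sigma_minus_self by simp
  qed
  ultimately show "x = y"
    by (rule eq_if_sigma_minus_self_eq_trace_eq[OF three])
qed

theorem not_inj_cube_trace_map_if_cube_root_of_unity:
  assumes three: "(3::'a) \<noteq> 0"
    and z: "z ^ 3 = 1" "z \<noteq> 1" "\<sigma> z = z"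
    and x: "\<sigma> x \<noteq> x"
  shows "\<not> inj (cube_trace_map c h)"
proof
  assume inj: "inj (cube_trace_map c h)"
  define a where "a = (1 - z) * trace x / 3"
  have a_fixed: "\<sigma> a = a"
    using z(3) by (simp add: a_def sigma_divide sigma_mult sigma_diff)
  define y where "y = z * x + a"
  have "\<sigma> y - y = z * (\<sigma> x - x)"
    using z(3) a_fixed by (simp add: y_def sigma_add sigma_mult algebra_simps)
  moreover have "trace y = trace x"
  proof -
    have "trace y = z * trace x + 3 * a"
      using z(3) a_fixed by (simp add: y_def trace_add trace_mult_fixed trace_fixed)
    also have "3 * a = (1 - z) * trace x"
      using three by (simp add: a_def)
    finally show ?thesis
      by (simp add: algebra_simps)
  qed
  ultimately have "cube_trace_map c h y = cube_trace_map c h x"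
    using z(1) by (simp add: cube_trace_map_def power_mult_distrib)
  then have "z * x + a = x"
    unfolding y_def by (rule injD[OF inj])
  then have "x = a / (1 - z)"
    using z(2) by (simp add: field_simps)
  then show False
    using x a_fixed z(3) by (simp add: sigma_divide sigma_diff)
qed

theorem not_inj_cube_trace_map_if_3_eq_0:
  assumes "(3::'a) = 0"
  shows "\<not> inj (cube_trace_map c h)"
proof -
  have "cube_trace_map c h 1 = cube_trace_map c h 0"
    using assms by (simp add: cube_trace_map_def trace_def)
  then show ?thesis
    by (metis injD zero_neq_one)
qed

end

lemma card_power_eq_poly_le:
  fixes p :: "'a::idom poly"
  assumes "degree p < n"
  shows "card {x. x ^ n = poly p x} \<le> n"
proof -
  define P where "P = Polynomial.monom 1 n - p"
  have "degree P = degree (Polynomial.monom 1 n + - p)"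
    by (simp add: P_def)
  also have "\<dots> = n"
    using assms by (subst degree_add_eq_left) (simp_all add: degree_monom_eq)
  finally have deg: "degree P = n" .
  then have "P \<noteq> 0"
    using assms by auto
  then have "card {x. poly P x = 0} \<le> n"
    using card_poly_roots_bound[of P] deg by simp
  moreover have "{x. poly P x = 0} = {x. x ^ n = poly p x}"
    by (simp add: P_def poly_monom)
  ultimately show ?thesis
    by simp
qed

(* The library's finite_field_power_card_eq_same needs sort finite_field, not {field,finite}. *)
lemma power_card_minus_1_eq_1:
  fixes x :: "'a::{field,finite}"
  assumes "x \<noteq> 0"
  shows "x ^ (card (UNIV :: 'a set) - 1) = 1"
proof -
  let ?U = "UNIV - {0} :: 'a set"
  have "x ^ card ?U * \<Prod>?U = (\<Prod>y\<in>?U. x * y)"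
    by (simp add: prod.distrib)
  also have "\<dots> = \<Prod>?U"
    using assms by (intro prod.reindex_bij_witness[of _ "\<lambda>y. y / x" "\<lambda>y. x * y"]) auto
  finally have "x ^ card ?U = 1"
    by simp
  then show ?thesis
    by (simp add: card_Diff_singleton)
qed

lemma power_card_eq_self:
  fixes x :: "'a::{field,finite}"
  shows "x ^ card (UNIV :: 'a set) = x"
proof (cases "x = 0")
  case False
  have "card (UNIV :: 'a set) = Suc (card (UNIV :: 'a set) - 1)"
    by (simp add: card_gt_0_iff)
  then have "x ^ card (UNIV :: 'a set) = x * x ^ (card (UNIV :: 'a set) - 1)"
    by (metis power_Suc)
  then show ?thesis
    using power_card_minus_1_eq_1[OF False] by simp
qed (simp add: card_gt_0_iff)

lemma prime_CHAR_finite: "prime CHAR('a::{idom,finite})"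
  by (rule prime_CHAR_semidom) (simp add: finite_imp_CHAR_pos)

lemma CHAR_eq_if_card_eq_prime_power:
  assumes "prime p" and "n > 0" and "card (UNIV :: 'a::{idom,finite} set) = p ^ n"
  shows "CHAR('a) = p"
proof -
  have "CHAR('a) dvd p ^ n"
    using CHAR_dvd_CARD[where 'a = 'a] assms(3) by simp
  then have "CHAR('a) dvd p"
    using prime_CHAR_finite prime_dvd_power by blast
  then show ?thesis
    using assms(1) prime_CHAR_finite primes_dvd_imp_eq by blast
qed

lemma power_CHAR_power_add:
  fixes x y :: "'a::{idom,finite}"
  shows "(x + y) ^ (CHAR('a) ^ n) = x ^ (CHAR('a) ^ n) + y ^ (CHAR('a) ^ n)"
  by (rule freshmans_dream'[OF prime_CHAR_finite refl])

lemma inj_power_CHAR_power: "inj (\<lambda>x::'a::{idom,finite}. x ^ (CHAR('a) ^ n))"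
proof (rule injI)
  fix x y :: 'a
  assume "x ^ (CHAR('a) ^ n) = y ^ (CHAR('a) ^ n)"
  then have "(x - y) ^ (CHAR('a) ^ n) = 0"
    using power_CHAR_power_add[of "x - y" y n] by simp
  then show "x = y"
    by simp
qed

lemma period_3_automorphism_frobenius:
  fixes q :: nat
  assumes "card (UNIV :: 'a::{field,finite} set) = q ^ 3" and "q = CHAR('a) ^ k"
  shows "period_3_automorphism (\<lambda>x::'a. x ^ q)"
proof
  fix x y :: 'a
  show "(x + y) ^ q = x ^ q + y ^ q"
    unfolding assms(2) by (rule power_CHAR_power_add)
  show "(x * y) ^ q = x ^ q * y ^ q"
    by (rule power_mult_distrib)
  have "((x ^ q) ^ q) ^ q = x ^ card (UNIV :: 'a set)"
    by (simp add: assms(1) power3_eq_cube flip: power_mult)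
  then show "((x ^ q) ^ q) ^ q = x"
    by (simp add: power_card_eq_self)
qed

lemma inj_cube_if_card_mod_3_eq_2:
  assumes "card (UNIV :: 'a::{field,finite} set) mod 3 = 2"
  shows "inj (\<lambda>x::'a. x ^ 3)"
proof (rule inj_on_inverseI)
  define N where "N = card (UNIV :: 'a set)"
  define m where "m = (2 * N - 1) div 3"
  have "N mod 3 = 2"
    using assms by (simp add: N_def)
  then have m: "3 * m = N + (N - 1)"
    unfolding m_def by presburger
  fix x :: 'a
  have "(x ^ 3) ^ m = x ^ N * x ^ (N - 1)"
    by (simp only: m power_add flip: power_mult)
  also have "\<dots> = x ^ N"
    using power_card_minus_1_eq_1[of x]
    by (cases "x = 0") (simp_all add: N_def power_card_eq_self)
  finally show "(x ^ 3) ^ m = x"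
    by (simp add: N_def power_card_eq_self)
qed

lemma ex_cube_root_of_unity_if_card_mod_3_eq_1:
  assumes "card (UNIV :: 'a::{field,finite} set) mod 3 = 1"
  shows "\<exists>z::'a. z ^ 3 = 1 \<and> z \<noteq> 1"
proof -
  define N where "N = card (UNIV :: 'a set)"
  define M where "M = (N - 1) div 3"
  have "N mod 3 = 1"
    using assms by (simp add: N_def)
  then have M: "3 * M = N - 1"
    unfolding M_def by presburger
  have "card {0::'a, 1} \<le> N"
    unfolding N_def by (rule card_mono) simp_all
  then have "M > 0"
    using assms M by (simp add: N_def)
  have "\<exists>a::'a. a \<noteq> 0 \<and> a ^ M \<noteq> 1"
  proof (rule ccontr)
    assume "\<not> ?thesis"
    then have "UNIV = insert 0 {x::'a. x ^ M = poly 1 x}"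
      by auto
    moreover have "0 \<notin> {x::'a. x ^ M = poly 1 x}"
      using \<open>M > 0\<close> by (simp add: power_0_left)
    ultimately have "N = Suc (card {x::'a. x ^ M = poly 1 x})"
      unfolding N_def by (metis card_insert_disjoint finite_code)
    also have "\<dots> \<le> Suc M"
      using card_power_eq_poly_le[of 1 M] \<open>M > 0\<close> by simp
    finally show False
      using M \<open>M > 0\<close> by linarith
  qed
  then obtain a :: 'a where "a \<noteq> 0" and "a ^ M \<noteq> 1"
    by blast
  moreover have "(a ^ M) ^ 3 = 1"
  proof -
    have "(a ^ M) ^ 3 = a ^ (N - 1)"
      by (metis M power_mult mult.commute)
    then show ?thesis
      using power_card_minus_1_eq_1[OF \<open>a \<noteq> 0\<close>] by (simp add: N_def)
  qed
  ultimately show ?thesis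
    by blast
qed

lemma ex_not_fixed_by_power:
  assumes "1 < n" and "n < card (UNIV :: 'a::{idom,finite} set)"
  shows "\<exists>x::'a. x ^ n \<noteq> x"
proof (rule ccontr)
  assume "\<not> ?thesis"
  then have "{x::'a. x ^ n = poly [:0, 1:] x} = UNIV"
    by simp
  then show False
    using card_power_eq_poly_le[of "[:0, 1:] :: 'a poly" n] assms by simp
qed

lemma three_eq_0_iff_dvd_CHAR_power:
  assumes "k > 0"
  shows "(3::'a::{idom,finite}) = 0 \<longleftrightarrow> 3 dvd CHAR('a) ^ k"
proof -
  have "(3::'a) = 0 \<longleftrightarrow> CHAR('a) dvd 3"
    using of_nat_eq_0_iff_char_dvd[of 3, where 'a = 'a] by simp
  also have "\<dots> \<longleftrightarrow> CHAR('a) = 3"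
    using primes_dvd_imp_eq[OF prime_CHAR_finite, of 3] by auto
  also have "\<dots> \<longleftrightarrow> 3 dvd CHAR('a) ^ k"
    using assms prime_CHAR_finite[where 'a = 'a] primes_dvd_imp_eq[of 3 "CHAR('a)"]
    by (auto simp: prime_dvd_power_iff)
  finally show ?thesis .
qed

context
  fixes q k Q l :: nat
  assumes card_UNIV: "card (UNIV :: 'a::{field,finite} set) = q ^ 3"
    and q_eq: "q = CHAR('a) ^ k" and k_pos: "k > 0"
    and Q_eq: "Q = CHAR('a) ^ l"
begin

interpretation frob: period_3_automorphism "\<lambda>x::'a. x ^ q"
  using card_UNIV q_eq by (rule period_3_automorphism_frobenius)

lemma f6_eq_cube_trace_map: "f6 q Q (c::'a) = frob.cube_trace_map c (\<lambda>t. t ^ Q)"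
proof
  fix x :: 'a
  define y where "y = x ^ q"
  have powers: "x ^ (3 * q) = y ^ 3" "x ^ (2 * q + 1) = y\<^sup>2 * x" "x ^ (q + 2) = y * x\<^sup>2"
    unfolding y_def
    by (metis power_mult mult.commute, metis power_add power_mult mult.commute power_one_right,
        rule power_add)
  have trace_power: "frob.trace x ^ Q = x ^ (q\<^sup>2 * Q) + x ^ (q * Q) + x ^ Q"
    unfolding Q_eq
    by (simp add: frob.trace_def power_CHAR_power_add power2_eq_square algebra_simps flip: power_mult)
  have "f6 q Q c x = (y ^ 3 - 3 * y\<^sup>2 * x + 3 * y * x\<^sup>2 - x ^ 3)
      + c * (x ^ (q\<^sup>2 * Q) + x ^ (q * Q) + x ^ Q)"
    unfolding f6_def powers by (simp add: algebra_simps)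
  also have "\<dots> = frob.cube_trace_map c (\<lambda>t. t ^ Q) x"
    using trace_power
    by (simp add: frob.cube_trace_map_def y_def[symmetric] power3_eq_cube power2_eq_square
        algebra_simps)
  finally show "f6 q Q c x = frob.cube_trace_map c (\<lambda>t. t ^ Q) x" .
qed

lemma bij_f6_iff_inj_cube_trace_map:
  "bij (f6 q Q (c::'a)) \<longleftrightarrow> inj (frob.cube_trace_map c (\<lambda>t. t ^ Q))"
  unfolding f6_eq_cube_trace_map bij_def using finite_UNIV_inj_surj[OF finite_UNIV] by blast

lemma three_eq_0_iff_3_dvd: "(3::'a) = 0 \<longleftrightarrow> 3 dvd q"
  unfolding q_eq using k_pos by (rule three_eq_0_iff_dvd_CHAR_power)

lemma not_bij_f6_if_3_dvd:
  assumes "3 dvd q"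
  shows "\<not> bij (f6 q Q (c::'a))"
  using assms frob.not_inj_cube_trace_map_if_3_eq_0
  by (simp add: three_eq_0_iff_3_dvd bij_f6_iff_inj_cube_trace_map)

lemma ex_frob_fixed_cube_root_of_unity:
  assumes "q mod 3 = 1"
  shows "\<exists>z::'a. z ^ 3 = 1 \<and> z \<noteq> 1 \<and> z ^ q = z"
proof -
  have "card (UNIV :: 'a set) mod 3 = (q mod 3) ^ 3 mod 3"
    by (simp add: card_UNIV power_mod)
  then obtain z :: 'a where z: "z ^ 3 = 1" "z \<noteq> 1"
    using assms ex_cube_root_of_unity_if_card_mod_3_eq_1 by auto
  have "q = 3 * (q div 3) + 1"
    using assms by presburger
  then have "z ^ q = (z ^ 3) ^ (q div 3) * z"
    by (metis power_add power_mult power_one_right)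
  with z show ?thesis
    by auto
qed

lemma ex_not_frob_fixed: "\<exists>x::'a. x ^ q \<noteq> x"
proof (rule ex_not_fixed_by_power)
  show "1 < q"
    unfolding q_eq using prime_gt_1_nat[OF prime_CHAR_finite] k_pos by (rule one_less_power)
  then show "q < card (UNIV :: 'a set)"
    using power_strict_increasing_iff[of q 1 3] card_UNIV by simp
qed

lemma not_bij_f6_if_mod_3_eq_1:
  assumes "q mod 3 = 1"
  shows "\<not> bij (f6 q Q (c::'a))"
proof -
  obtain z :: 'a where "z ^ 3 = 1" "z \<noteq> 1" "z ^ q = z"
    using ex_frob_fixed_cube_root_of_unity[OF assms] by blast
  moreover obtain x :: 'a where "x ^ q \<noteq> x"
    using ex_not_frob_fixed by blast
  moreover have "(3::'a) \<noteq> 0"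
    using assms by (simp add: three_eq_0_iff_3_dvd dvd_eq_mod_eq_0)
  ultimately show ?thesis
    using frob.not_inj_cube_trace_map_if_cube_root_of_unity
    by (simp add: bij_f6_iff_inj_cube_trace_map)
qed

lemma bij_f6_if_mod_3_eq_2:
  assumes "q mod 3 = 2" and "c ^ q = c" and "c \<noteq> 0"
  shows "bij (f6 q Q (c::'a))"
  unfolding bij_f6_iff_inj_cube_trace_map
proof (rule frob.inj_cube_trace_map)
  have "card (UNIV :: 'a set) mod 3 = (q mod 3) ^ 3 mod 3"
    by (simp add: card_UNIV power_mod)
  then show "inj (\<lambda>x::'a. x ^ 3)"
    using assms(1) by (intro inj_cube_if_card_mod_3_eq_2) simp
  show "(3::'a) \<noteq> 0"
    using assms(1) by (simp add: three_eq_0_iff_3_dvd dvd_eq_mod_eq_0)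
  show "inj (\<lambda>t::'a. t ^ Q)"
    unfolding Q_eq by (rule inj_power_CHAR_power)
  show "(t ^ Q) ^ q = t ^ Q" if "t ^ q = t" for t :: 'a
    using that by (metis power_mult mult.commute)
qed (use assms(2,3) in simp_all)

end

theorem corollary1p9:
  fixes p k l :: nat and c :: "'a::{field,finite}"
  assumes "prime p" and "k > 0"
    and "card (UNIV :: 'a set) = (p ^ k) ^ 3"
    and "c ^ (p ^ k) = c" and "c \<noteq> 0"
  shows "bij (f6 (p ^ k) (p ^ l) c) \<longleftrightarrow> (p ^ k) mod 3 = 2"
proof -
  have "CHAR('a) = p"
    using assms(1-3) by (intro CHAR_eq_if_card_eq_prime_power[of p "k * 3"]) (simp_all add: power_mult)
  then have setting: "card (UNIV :: 'a set) = (p ^ k) ^ 3" "p ^ k = CHAR('a) ^ k" "k > 0"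
    "p ^ l = CHAR('a) ^ l"
    using assms(2,3) by simp_all
  consider "p ^ k mod 3 = 0" | "p ^ k mod 3 = 1" | "p ^ k mod 3 = 2"
    by arith
  then show ?thesis
  proof cases
    case 1
    then show ?thesis
      using not_bij_f6_if_3_dvd[OF setting] by (simp add: dvd_eq_mod_eq_0)
  next
    case 2
    then show ?thesis
      using not_bij_f6_if_mod_3_eq_1[OF setting] by simp
  next
    case 3
    then show ?thesis
      using bij_f6_if_mod_3_eq_2[OF setting _ assms(4,5)] by simp
  qed
qed

end
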